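(* Let $\mathcal W\in{\rm Gr}^{(0)}_+$ with wave function $\Psi$ and canonical operator $\mathtt Q_{\mathcal W}$. If $\mathtt B=\sum_{k\ge0}\mathtt B_k\partial_z^k\in\mathcal D$ satisfies $\mathtt B_0=\Psi$ and $\mathtt Q_{\mathcal W}\,\mathtt B=\mathtt B\,z$, then $\mathtt B=\mathtt G_{\mathcal W}$.
   Context: $H_+=\mathbb C[z]$, $H_-=z^{-1}\mathbb C[[z^{-1}]]$, $H=H_+\oplus H_-$. ${\rm Gr}^{(0)}_+$ is the set of closed subspaces $\mathcal W\subset H$ with $\pi_+:\mathcal W\to H_+$ (projection along $H_-$) an isomorphism. $\mathcal D=\mathbb C((z^{-1}))[[\partial_z]]$ is the ring of differential operators $\sum_{m\ge0}a_m(z)\partial_z^m$, $a_m\in H$, acting on $H$; $\mathcal D_\pm=H_\pm[[\partial_z]]$. $\mathtt G_{\mathcal W}$ is the unique operator with $\mathtt G_{\mathcal W}-1\in\mathcal D_-$ and $\mathcal W=\mathtt G_{\mathcal W}\cdot H_+$ (Sato's theorem); $\mathtt Q_{\mathcal W}:=\mathtt G_{\mathcal W}z\mathtt G_{\mathcal W}^{-1}$. The wave function $\Psi$ is the unique element of $\mathcal W\cap(1+H_-)$. *)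

theory Defs
  imports "HOL-Computational_Algebra.Formal_Laurent_Series"
begin

unbundle fps_syntax

text \<open>
  H = C((z^-1)) is modelled by the library type of formal Laurent series
  complex fls in the variable w = z^-1: the coefficient of z^n in f is f $$ (-n).
  Hence H_+ = C[z] consists of the series with f $$ k = 0 for k > 0, and
  H_- = z^-1 C[[z^-1]] of those with f $$ k = 0 for k <= 0.
  The topology on H is the library (w-adic) metric topology on fls.
\<close>

type_synonym H = "complex fls"

definition zH :: H where "zH = fls_X_inv"

definition Hplus :: "H set" where "Hplus = {f. \<forall>k>0. f $$ k = 0}"

definition Hminus :: "H set" where "Hminus = {f. \<forall>k\<le>0. f $$ k = 0}"

definition piplus :: "H \<Rightarrow> H" where
  "piplus f = Abs_fls (\<lambda>k. if k \<le> 0 then f $$ k else 0)"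

text \<open>d/dz = - w^2 d/dw.\<close>
definition zderiv :: "H \<Rightarrow> H" where
  "zderiv f = - (fls_X ^ 2 * fls_deriv f)"

definition fsummable :: "('i \<Rightarrow> H) \<Rightarrow> 'i set \<Rightarrow> bool" where
  "fsummable F I \<longleftrightarrow> (\<exists>N. \<forall>i\<in>I. \<forall>k<N. F i $$ k = 0) \<and> (\<forall>k. finite {i\<in>I. F i $$ k \<noteq> 0})"

definition fsum :: "('i \<Rightarrow> H) \<Rightarrow> 'i set \<Rightarrow> H" where
  "fsum F I = Abs_fls (\<lambda>k. \<Sum>i\<in>{i\<in>I. F i $$ k \<noteq> 0}. F i $$ k)"

text \<open>Operators in D = C((z^-1))[[d/dz]]: A represents sum_m (A m) (d/dz)^m.\<close>
type_synonym DOp = "nat \<Rightarrow> H"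

definition Dminus :: "DOp set" where "Dminus = {A. \<forall>m. A m \<in> Hminus}"

definition op_one :: DOp where "op_one = (\<lambda>m. if m = 0 then 1 else 0)"

definition op_z :: DOp where "op_z = (\<lambda>m. if m = 0 then zH else 0)"

definition op_sub :: "DOp \<Rightarrow> DOp \<Rightarrow> DOp" where "op_sub A B = (\<lambda>m. A m - B m)"

definition op_apply :: "DOp \<Rightarrow> H \<Rightarrow> H" where
  "op_apply A f = fsum (\<lambda>m. A m * (zderiv ^^ m) f) UNIV"

text \<open>Composition in D (Leibniz rule: d^m b = sum_k (m choose k) b^(k) d^(m-k)).\<close>
definition op_mult :: "DOp \<Rightarrow> DOp \<Rightarrow> DOp" where
  "op_mult A B = (\<lambda>p. fsum (\<lambda>(m, n, k). of_nat (m choose k) * A m * (zderiv ^^ k) (B n))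
                         {(m, n, k). k \<le> m \<and> m + n = p + k})"

definition op_inv :: "DOp \<Rightarrow> DOp" where
  "op_inv G = (THE Gi. op_sub Gi op_one \<in> Dminus \<and> op_mult G Gi = op_one \<and> op_mult Gi G = op_one)"

definition Gr0plus :: "H set set" where
  "Gr0plus = {W. 0 \<in> W \<and> (\<forall>x\<in>W. \<forall>y\<in>W. x + y \<in> W) \<and> (\<forall>c. \<forall>x\<in>W. fls_const c * x \<in> W)
               \<and> closed W \<and> bij_betw piplus W Hplus}"

definition satoG :: "H set \<Rightarrow> DOp" where
  "satoG W = (THE G. op_sub G op_one \<in> Dminus \<and> W = op_apply G ` Hplus)"

definition opQ :: "H set \<Rightarrow> DOp" where
  "opQ W = op_mult (op_mult (satoG W) op_z) (op_inv (satoG W))"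

definition wavePsi :: "H set \<Rightarrow> H" where
  "wavePsi W = (THE psi. psi \<in> W \<and> psi - 1 \<in> Hminus)"

end

theory Submission
  imports Defs
begin

text \<open>
  Comparing the coefficients of \<open>\<partial>\<^sub>z\<^sup>p\<close> in \<open>Q B = B z\<close> gives
  \<open>(Q B)\<^sub>p = B\<^sub>p z + (p + 1) B\<^sub>p\<^sub>+\<^sub>1\<close>, and \<open>(Q B)\<^sub>p\<close> only involves \<open>B\<^sub>0, \<dots>, B\<^sub>p\<close>;
  so a solution of the intertwining equation is determined by its zeroth coefficient. It remains
  to see that \<open>G\<^sub>W\<close> is a solution with \<open>(G\<^sub>W)\<^sub>0 = G\<^sub>W 1 = \<Psi>\<close>. This needs the objects defined by
  description to exist: \<open>G\<^sub>W\<close> is constructed coefficient by coefficient so that \<open>G z\<^sup>n \<in> W\<close>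
  (the leading term of \<open>G z\<^sup>n\<close> is a nonzero multiple of \<open>G\<^sub>n\<close>), it is unique because
  \<open>W \<inter> H\<^sub>- = 0\<close>, and it is inverted in \<open>1 + D\<^sub>-\<close> by the same triangular recursion together with
  a Neumann series; then \<open>Q G\<^sub>W = G\<^sub>W z G\<^sub>W\<^sup>-\<^sup>1 G\<^sub>W = G\<^sub>W z\<close>. Identities between operators are checked on
  the monomials \<open>z\<^sup>n\<close>, which determine an operator, using \<open>(A B) f = A (B f)\<close>.
\<close>

section \<open>Orders of Laurent series and the derivation \<open>d/dz\<close>\<close>

definition val_ge :: "H \<Rightarrow> int \<Rightarrow> bool" where
  "val_ge f N \<longleftrightarrow> (\<forall>k<N. f $$ k = 0)"

lemma val_ge_subdegree: "val_ge f (fls_subdegree f)"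
  unfolding val_ge_def by simp

lemma val_ge_mono: "val_ge f a \<Longrightarrow> b \<le> a \<Longrightarrow> val_ge f b"
  unfolding val_ge_def by auto

lemma val_ge_common: "\<exists>c. val_ge f c \<and> val_ge g c"
  by (metis min.cobounded1 min.cobounded2 val_ge_mono val_ge_subdegree)

lemma val_ge_0 [simp]: "val_ge 0 a"
  and val_ge_1: "val_ge 1 0"
  and val_ge_const: "val_ge (fls_const x) 0"
  and val_ge_of_nat: "val_ge (of_nat n) 0"
  unfolding val_ge_def by (auto simp: fls_of_nat_nth)

lemma val_ge_add: "val_ge f a \<Longrightarrow> val_ge g a \<Longrightarrow> val_ge (f + g) a"
  and val_ge_diff: "val_ge f a \<Longrightarrow> val_ge g a \<Longrightarrow> val_ge (f - g) a"
  and val_ge_uminus: "val_ge f a \<Longrightarrow> val_ge (- f) a"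
  unfolding val_ge_def by auto

lemma val_ge_sum: "(\<And>i. i \<in> S \<Longrightarrow> val_ge (F i) a) \<Longrightarrow> val_ge (sum F S) a"
  unfolding val_ge_def by (auto simp: fls_nth_sum)

lemma val_ge_mult:
  assumes f: "val_ge f a" and g: "val_ge g b"
  shows "val_ge (f * g) (a + b)"
proof (cases "f = 0 \<or> g = 0")
  case False
  then have "a \<le> fls_subdegree f" "b \<le> fls_subdegree g"
    using f g unfolding val_ge_def by (auto intro: fls_subdegree_geI)
  then show ?thesis unfolding val_ge_def by (auto intro: fls_times_nth_eq0)
qed auto

lemma val_ge_nth_zero: "val_ge f a \<Longrightarrow> k < a \<Longrightarrow> f $$ k = 0"
  unfolding val_ge_def by blast

lemma mult_nth_truncate:
  assumes "val_ge c a" "\<And>j. j \<le> k - a \<Longrightarrow> s $$ j = s' $$ j"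
  shows "(c * s) $$ k = (c * s') $$ k"
proof -
  have "val_ge (s - s') (k - a + 1)" using assms(2) unfolding val_ge_def by auto
  then have "val_ge (c * (s - s')) (k + 1)" using val_ge_mult[OF assms(1)] by fastforce
  then show ?thesis by (simp add: val_ge_def algebra_simps)
qed

lemma zderiv_nth: "zderiv f $$ k = - of_int (k - 1) * f $$ (k - 1)"
  unfolding zderiv_def by (simp add: fls_X_power_times_conv_shift algebra_simps)

lemma zderiv_add: "zderiv (f + g) = zderiv f + zderiv g"
  and zderiv_diff: "zderiv (f - g) = zderiv f - zderiv g"
  and zderiv_0 [simp]: "zderiv 0 = 0"
  and zderiv_1 [simp]: "zderiv 1 = 0"
  and zderiv_const [simp]: "zderiv (fls_const c) = 0"
  and zderiv_of_nat [simp]: "zderiv (of_nat n) = 0"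
  and zderiv_zH [simp]: "zderiv zH = 1"
  by (rule fls_eqI; simp add: zderiv_nth zH_def fls_of_nat_nth algebra_simps)+

lemma zderiv_sum: "zderiv (sum F S) = (\<Sum>i\<in>S. zderiv (F i))"
  by (induction S rule: infinite_finite_induct) (auto simp: zderiv_add)

lemma zderiv_mult: "zderiv (f * g) = zderiv f * g + f * zderiv g"
  unfolding zderiv_def by (simp add: algebra_simps)

lemma zderiv_pow_add: "(zderiv ^^ m) (f + g) = (zderiv ^^ m) f + (zderiv ^^ m) g"
  and zderiv_pow_diff: "(zderiv ^^ m) (f - g) = (zderiv ^^ m) f - (zderiv ^^ m) g"
  and zderiv_pow_sum: "(zderiv ^^ m) (sum F S) = (\<Sum>i\<in>S. (zderiv ^^ m) (F i))"
  and zderiv_pow_const_mult: "(zderiv ^^ m) (fls_const d * f) = fls_const d * (zderiv ^^ m) f"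
  and zderiv_pow_0 [simp]: "(zderiv ^^ m) 0 = 0"
  by (induction m) (auto simp: zderiv_add zderiv_diff zderiv_sum zderiv_mult)

text \<open>\<open>zderiv_factor m k = (-1)^m (k-1)(k-2)\<cdots>(k-m)\<close>.\<close>
fun zderiv_factor :: "nat \<Rightarrow> int \<Rightarrow> complex" where
  "zderiv_factor 0 k = 1"
| "zderiv_factor (Suc m) k = - of_int (k - 1) * zderiv_factor m (k - 1)"

lemma zderiv_pow_nth: "(zderiv ^^ m) f $$ k = zderiv_factor m k * f $$ (k - int m)"
  by (induction m arbitrary: k) (auto simp: zderiv_nth algebra_simps)

lemma zderiv_factor_eq_0: "1 \<le> k \<Longrightarrow> k \<le> int m \<Longrightarrow> zderiv_factor m k = 0"
proof (induction m arbitrary: k)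
  case (Suc m)
  then show ?case by (cases "k = 1") auto
qed simp

lemma zderiv_factor_nonzero: "k \<le> 0 \<Longrightarrow> zderiv_factor m k \<noteq> 0"
  by (induction m arbitrary: k) auto

lemma val_ge_zderiv_pow: "val_ge f a \<Longrightarrow> val_ge ((zderiv ^^ m) f) (a + int m)"
  unfolding val_ge_def by (auto simp: zderiv_pow_nth)

lemma Suc_choose_if: "Suc n choose k = (n choose k) + (if k = 0 then 0 else n choose (k - 1))"
  by (cases k) simp_all

lemma zderiv_pow_Leibniz:
  "(zderiv ^^ n) (f * g) =
     (\<Sum>i = 0..n. of_nat (n choose i) * (zderiv ^^ i) f * (zderiv ^^ (n - i)) g)"
proof (induction n)
  case (Suc n)
  define A where "A i = (zderiv ^^ i) f * (zderiv ^^ (Suc n - i)) g" for i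
  have "(zderiv ^^ Suc n) (f * g) =
      (\<Sum>i = 0..n. of_nat (n choose i) * A (Suc i)) + (\<Sum>i = 0..n. of_nat (n choose i) * A i)"
    by (simp add: Suc.IH A_def zderiv_sum zderiv_mult algebra_simps sum.distrib Suc_diff_le)
  also have "(\<Sum>i = 0..n. of_nat (n choose i) * A (Suc i)) =
      (\<Sum>i = 0..Suc n. of_nat (if i = 0 then 0 else n choose (i - 1)) * A i)"
    by (subst sum.atLeast0_atMost_Suc_shift) simp
  also have "(\<Sum>i = 0..n. of_nat (n choose i) * A i) = (\<Sum>i = 0..Suc n. of_nat (n choose i) * A i)"
    by simp
  also have "(\<Sum>i = 0..Suc n. of_nat (if i = 0 then 0 else n choose (i - 1)) * A i)
      + (\<Sum>i = 0..Suc n. of_nat (n choose i) * A i) = (\<Sum>i = 0..Suc n. of_nat (Suc n choose i) * A i)"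
    by (simp add: sum.distrib[symmetric] algebra_simps Suc_choose_if)
  finally show ?case by (simp add: A_def mult.assoc)
qed simp

section \<open>Formal sums\<close>

lemma fsum_nth:
  assumes "fsummable F I"
  shows "fsum F I $$ k = (\<Sum>i\<in>{i\<in>I. F i $$ k \<noteq> 0}. F i $$ k)"
proof -
  from assms obtain N where "\<forall>i\<in>I. \<forall>k<N. F i $$ k = 0" unfolding fsummable_def by blast
  then have "\<forall>n<N. (\<Sum>i\<in>{i\<in>I. F i $$ n \<noteq> 0}. F i $$ n) = 0" by auto
  then show ?thesis unfolding fsum_def by (subst nth_Abs_fls_lower_bound) auto
qed

lemma fsum_nth_eq_sum:
  assumes "fsummable F I" "finite S" "S \<subseteq> I" "\<And>i. i \<in> I \<Longrightarrow> i \<notin> S \<Longrightarrow> F i $$ k = 0"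
  shows "fsum F I $$ k = (\<Sum>i\<in>S. F i $$ k)"
  unfolding fsum_nth[OF assms(1)] by (rule sum.mono_neutral_left) (use assms in auto)

lemma fsum_eq_sum:
  assumes "finite S" "S \<subseteq> I" "\<And>i. i \<in> I \<Longrightarrow> i \<notin> S \<Longrightarrow> F i = 0"
  shows "fsum F I = sum F S"
proof -
  have "(\<Sum>i\<in>{i\<in>I. F i $$ k \<noteq> 0}. F i $$ k) = sum F S $$ k" for k
  proof -
    have "(\<Sum>i\<in>{i\<in>I. F i $$ k \<noteq> 0}. F i $$ k) = (\<Sum>i\<in>S. F i $$ k)"
      by (rule sum.mono_neutral_left) (use assms in force)+
    then show ?thesis by (simp add: fls_nth_sum)
  qed
  then show ?thesis unfolding fsum_def by (simp add: fls_nth_inverse)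
qed

lemma fsum_empty [simp]: "fsum F {} = 0"
  using fsum_eq_sum[of "{}" "{}" F] by simp

lemma fsummableI:
  assumes "\<And>i. i \<in> I \<Longrightarrow> val_ge (F i) N"
    and "\<And>k. \<exists>S. finite S \<and> (\<forall>i\<in>I. i \<notin> S \<longrightarrow> F i $$ k = 0)"
  shows "fsummable F I"
  unfolding fsummable_def
proof (intro conjI allI exI[of _ N])
  show "\<forall>i\<in>I. \<forall>k<N. F i $$ k = 0" using assms(1) unfolding val_ge_def by auto
  fix k
  obtain S where "finite S" "\<forall>i\<in>I. i \<notin> S \<longrightarrow> F i $$ k = 0" using assms(2) by blast
  then show "finite {i\<in>I. F i $$ k \<noteq> 0}" by (auto elim: finite_subset[rotated])
qed

lemma fsummable_subset:
  assumes "fsummable F I" "J \<subseteq> I"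
  shows "fsummable F J"
proof -
  have "{i\<in>J. F i $$ k \<noteq> 0} \<subseteq> {i\<in>I. F i $$ k \<noteq> 0}" for k using assms(2) by blast
  then show ?thesis using assms unfolding fsummable_def by (meson finite_subset subsetD)
qed

lemma val_ge_fsum:
  assumes "fsummable F I" "\<And>i. i \<in> I \<Longrightarrow> val_ge (F i) N"
  shows "val_ge (fsum F I) N"
  unfolding val_ge_def
proof (intro allI impI)
  fix k assume "k < N"
  then have "{i\<in>I. F i $$ k \<noteq> 0} = {}" using assms(2) unfolding val_ge_def by auto
  then show "fsum F I $$ k = 0" by (simp add: fsum_nth[OF assms(1)])
qed

lemma fsum_cong:
  assumes "\<And>i. i \<in> I \<Longrightarrow> F i = G i"
  shows "fsum F I = fsum G I"
proof -
  have "{i\<in>I. F i $$ k \<noteq> 0} = {i\<in>I. G i $$ k \<noteq> 0}" for k using assms by auto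
  then have "(\<lambda>k. \<Sum>i\<in>{i\<in>I. F i $$ k \<noteq> 0}. F i $$ k) = (\<lambda>k. \<Sum>i\<in>{i\<in>I. G i $$ k \<noteq> 0}. G i $$ k)"
    using assms by (intro ext sum.cong) auto
  then show ?thesis unfolding fsum_def by simp
qed

lemma fsum_reindex:
  assumes "inj_on h J"
  shows "fsum F (h ` J) = fsum (F \<circ> h) J"
proof -
  have "(\<Sum>i\<in>{i\<in>h ` J. F i $$ k \<noteq> 0}. F i $$ k) = (\<Sum>j\<in>{j\<in>J. F (h j) $$ k \<noteq> 0}. F (h j) $$ k)"
    for k
  proof -
    have "{i\<in>h ` J. F i $$ k \<noteq> 0} = h ` {j\<in>J. F (h j) $$ k \<noteq> 0}" by auto
    moreover have "inj_on h {j\<in>J. F (h j) $$ k \<noteq> 0}" using assms by (rule inj_on_subset) auto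
    ultimately show ?thesis by (simp add: sum.reindex)
  qed
  then show ?thesis unfolding fsum_def by simp
qed

lemma fsum_split:
  assumes "fsummable F I" "J \<subseteq> I"
  shows "fsum F I = fsum F J + fsum F (I - J)"
proof (rule fls_eqI)
  fix k
  have fin: "finite {i\<in>I. F i $$ k \<noteq> 0}" using assms(1) unfolding fsummable_def by auto
  have "{i\<in>I. F i $$ k \<noteq> 0} = {i\<in>J. F i $$ k \<noteq> 0} \<union> {i\<in>I - J. F i $$ k \<noteq> 0}"
    using assms(2) by auto
  then have "(\<Sum>i\<in>{i\<in>I. F i $$ k \<noteq> 0}. F i $$ k) =
      (\<Sum>i\<in>{i\<in>J. F i $$ k \<noteq> 0}. F i $$ k) + (\<Sum>i\<in>{i\<in>I - J. F i $$ k \<noteq> 0}. F i $$ k)"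
    using fin by (subst sum.union_disjoint[symmetric]) (auto elim: finite_subset[rotated])
  then show "fsum F I $$ k = (fsum F J + fsum F (I - J)) $$ k"
    using assms by (simp add: fsum_nth fsummable_subset)
qed

section \<open>Action and composition of operators\<close>

definition op_val_ge :: "DOp \<Rightarrow> int \<Rightarrow> bool" where
  "op_val_ge A N \<longleftrightarrow> (\<forall>m. val_ge (A m) N)"

lemma op_val_ge_one: "op_val_ge op_one 0"
  unfolding op_val_ge_def op_one_def val_ge_def by simp

lemma op_val_ge_z: "op_val_ge op_z (-1)"
  unfolding op_val_ge_def op_z_def val_ge_def zH_def by simp

lemma Dminus_op_val_ge:
  assumes "op_sub G op_one \<in> Dminus"
  shows "op_val_ge (op_sub G op_one) 1" "op_val_ge G 0"
proof -
  show *: "op_val_ge (op_sub G op_one) 1"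
    using assms unfolding Dminus_def op_val_ge_def Hminus_def val_ge_def by auto
  have "G m = op_sub G op_one m + op_one m" for m by (simp add: op_sub_def)
  then show "op_val_ge G 0"
    using * op_val_ge_one unfolding op_val_ge_def by (metis val_ge_add val_ge_mono zero_le_one)
qed

lemma val_ge_apply_term:
  "op_val_ge A a \<Longrightarrow> val_ge f c \<Longrightarrow> val_ge (A m * (zderiv ^^ m) f) (a + c + int m)"
  unfolding op_val_ge_def using val_ge_mult[OF _ val_ge_zderiv_pow] by (simp add: add.assoc)

lemma op_apply_summable:
  assumes "op_val_ge A a" "val_ge f c"
  shows "fsummable (\<lambda>m. A m * (zderiv ^^ m) f) UNIV"
proof (rule fsummableI)
  show "val_ge (A m * (zderiv ^^ m) f) (a + c)" for m
    using val_ge_apply_term[OF assms] by (rule val_ge_mono) simp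
  fix k
  have "(A m * (zderiv ^^ m) f) $$ k = 0" if "m \<notin> {..nat (k - a - c)}" for m
    using val_ge_nth_zero[OF val_ge_apply_term[OF assms]] that by simp
  then show "\<exists>S. finite S \<and> (\<forall>m\<in>UNIV. m \<notin> S \<longrightarrow> (A m * (zderiv ^^ m) f) $$ k = 0)"
    by blast
qed

lemma op_apply_nth:
  assumes "op_val_ge A a" "val_ge f c" "k - a - c \<le> int M"
  shows "op_apply A f $$ k = (\<Sum>m\<le>M. A m * (zderiv ^^ m) f) $$ k"
  unfolding op_apply_def fls_nth_sum
proof (rule fsum_nth_eq_sum[OF op_apply_summable[OF assms(1,2)]])
  fix m assume "m \<notin> {..M}"
  then show "(A m * (zderiv ^^ m) f) $$ k = 0"
    using val_ge_nth_zero[OF val_ge_apply_term[OF assms(1,2)]] assms(3) by simp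
qed auto

lemma val_ge_op_apply:
  assumes "op_val_ge A a" "val_ge f c"
  shows "val_ge (op_apply A f) (a + c)"
  unfolding op_apply_def
proof (rule val_ge_fsum[OF op_apply_summable[OF assms]])
  show "val_ge (A m * (zderiv ^^ m) f) (a + c)" for m
    using val_ge_apply_term[OF assms] by (rule val_ge_mono) simp
qed

lemma op_apply_eq_sum:
  assumes "\<And>m. m > N \<Longrightarrow> (zderiv ^^ m) f = 0"
  shows "op_apply A f = (\<Sum>m\<le>N. A m * (zderiv ^^ m) f)"
  unfolding op_apply_def by (rule fsum_eq_sum) (use assms in auto)

lemma op_apply_0 [simp]: "op_apply A 0 = 0"
  using op_apply_eq_sum[of 0 0 A] by simp

lemma op_apply_one [simp]: "op_apply op_one f = f"
proof -
  have "op_apply op_one f = (\<Sum>m\<in>{0}. op_one m * (zderiv ^^ m) f)"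
    unfolding op_apply_def by (rule fsum_eq_sum) (auto simp: op_one_def)
  then show ?thesis by (simp add: op_one_def)
qed

text \<open>The common lower bound \<open>c\<close> lets one finite truncation compute each coefficient of all
  the terms involved.\<close>
lemma
  assumes A: "op_val_ge A a" and f: "val_ge f c" and g: "val_ge g c"
  shows op_apply_add: "op_apply A (f + g) = op_apply A f + op_apply A g"
    and op_apply_diff: "op_apply A (f - g) = op_apply A f - op_apply A g"
    and op_apply_const_mult: "op_apply A (fls_const x * f) = fls_const x * op_apply A f"
proof -
  have fg: "val_ge (f + g) c" "val_ge (f - g) c" "val_ge (fls_const x * f) c"
    using f g val_ge_mult[OF val_ge_const f] by (auto intro: val_ge_add val_ge_diff)
  have M: "k - a - c \<le> int (nat (k - a - c))" for k by simp
  show "op_apply A (f + g) = op_apply A f + op_apply A g"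
    by (rule fls_eqI) (simp add: op_apply_nth[OF A fg(1) M] op_apply_nth[OF A f M]
        op_apply_nth[OF A g M] zderiv_pow_add distrib_left sum.distrib)
  show "op_apply A (f - g) = op_apply A f - op_apply A g"
    by (rule fls_eqI) (simp add: op_apply_nth[OF A fg(2) M] op_apply_nth[OF A f M]
        op_apply_nth[OF A g M] zderiv_pow_diff right_diff_distrib sum_subtractf)
  show "op_apply A (fls_const x * f) = fls_const x * op_apply A f"
  proof (rule fls_eqI)
    fix k
    have commute: "A m * (fls_const x * (zderiv ^^ m) f) = fls_const x * (A m * (zderiv ^^ m) f)"
      for m by (simp add: mult.left_commute)
    show "op_apply A (fls_const x * f) $$ k = (fls_const x * op_apply A f) $$ k"
      unfolding op_apply_nth[OF A fg(3) M] zderiv_pow_const_mult commute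
        sum_distrib_left[symmetric] fls_mult_const_nth op_apply_nth[OF A f M] ..
  qed
qed

lemma op_apply_sum:
  assumes A: "op_val_ge A a" and F: "\<And>i. i \<in> S \<Longrightarrow> val_ge (F i) c"
  shows "op_apply A (sum F S) = (\<Sum>i\<in>S. op_apply A (F i))"
  using F
proof (induction S rule: infinite_finite_induct)
  case (insert x S)
  then have "val_ge (sum F S) c" by (intro val_ge_sum) auto
  then show ?case using insert op_apply_add[OF A, of "F x" c "sum F S"] by simp
qed simp_all

lemma op_apply_op_sub:
  assumes A: "op_val_ge A a" and B: "op_val_ge B a" and f: "val_ge f c"
  shows "op_apply (op_sub A B) f = op_apply A f - op_apply B f"
proof (rule fls_eqI)
  fix k
  have AB: "op_val_ge (op_sub A B) a"
    using A B unfolding op_val_ge_def op_sub_def by (auto intro: val_ge_diff)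
  have M: "k - a - c \<le> int (nat (k - a - c))" by simp
  show "op_apply (op_sub A B) f $$ k = (op_apply A f - op_apply B f) $$ k"
    using op_apply_nth[OF A f M] op_apply_nth[OF B f M] unfolding op_apply_nth[OF AB f M]
    by (simp add: op_sub_def left_diff_distrib sum_subtractf)
qed

definition mult_index :: "nat \<Rightarrow> (nat \<times> nat \<times> nat) set" where
  "mult_index p = {(m, n, i). i \<le> m \<and> m + n = p + i}"

definition mult_term :: "DOp \<Rightarrow> DOp \<Rightarrow> nat \<times> nat \<times> nat \<Rightarrow> H" where
  "mult_term A B = (\<lambda>(m, n, i). of_nat (m choose i) * A m * (zderiv ^^ i) (B n))"

lemma op_mult_eq_fsum: "op_mult A B p = fsum (mult_term A B) (mult_index p)"
  unfolding op_mult_def mult_term_def mult_index_def by simp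

lemma val_ge_mult_term:
  assumes "op_val_ge A a" "op_val_ge B b"
  shows "val_ge (mult_term A B (m, n, i)) (a + b + int i)"
proof -
  have "val_ge (of_nat (m choose i) * A m * (zderiv ^^ i) (B n)) (0 + a + (b + int i))"
    using assms unfolding op_val_ge_def by (intro val_ge_mult val_ge_of_nat val_ge_zderiv_pow) auto
  then show ?thesis unfolding mult_term_def by (simp add: add.assoc)
qed

lemma mult_term_nth_zero:
  assumes "op_val_ge A a" "op_val_ge B b" "j - a - b < int i"
  shows "mult_term A B (m, n, i) $$ j = 0"
  using val_ge_nth_zero[OF val_ge_mult_term[OF assms(1,2)]] assms(3) by simp

lemma mult_index_bounded_finite: "finite {(m, n, i) \<in> mult_index p. i \<le> K}"
proof (rule finite_subset)
  show "{(m, n, i) \<in> mult_index p. i \<le> K} \<subseteq> {..p + K} \<times> {..p} \<times> {..K}"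
    unfolding mult_index_def by auto
qed auto

lemma op_mult_summable:
  assumes A: "op_val_ge A a" and B: "op_val_ge B b"
  shows "fsummable (mult_term A B) (mult_index p)"
proof (rule fsummableI)
  show "val_ge (mult_term A B t) (a + b)" for t
    using val_ge_mult_term[OF A B, of "fst t" "fst (snd t)" "snd (snd t)"]
    by (cases t) (auto elim: val_ge_mono)
  fix j
  have "mult_term A B t $$ j = 0"
    if "t \<in> mult_index p" "t \<notin> {(m, n, i) \<in> mult_index p. i \<le> nat (j - a - b)}" for t
    using that mult_term_nth_zero[OF A B] by (cases t) auto
  then show "\<exists>S. finite S \<and> (\<forall>t\<in>mult_index p. t \<notin> S \<longrightarrow> mult_term A B t $$ j = 0)"
    using mult_index_bounded_finite by blast
qed

lemma op_mult_nth_eq_sum: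
  assumes A: "op_val_ge A a" and B: "op_val_ge B b"
    and S: "finite S" "S \<subseteq> mult_index p"
    and outside: "\<And>m n i. (m, n, i) \<in> mult_index p - S \<Longrightarrow> j - a - b < int i"
  shows "op_mult A B p $$ j = (\<Sum>t\<in>S. mult_term A B t) $$ j"
  unfolding op_mult_eq_fsum fls_nth_sum
proof (rule fsum_nth_eq_sum[OF op_mult_summable[OF A B] S])
  fix t assume "t \<in> mult_index p" "t \<notin> S"
  then show "mult_term A B t $$ j = 0" using outside mult_term_nth_zero[OF A B] by (cases t) auto
qed

lemma op_val_ge_mult:
  assumes A: "op_val_ge A a" and B: "op_val_ge B b"
  shows "op_val_ge (op_mult A B) (a + b)"
  unfolding op_val_ge_def op_mult_eq_fsum
proof (intro allI val_ge_fsum[OF op_mult_summable[OF A B]])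
  show "val_ge (mult_term A B t) (a + b)" for t
    using val_ge_mult_term[OF A B, of "fst t" "fst (snd t)" "snd (snd t)"]
    by (cases t) (auto elim: val_ge_mono)
qed

text \<open>Both sides of \<open>(A B) f = A (B f)\<close> have the same coefficients: they are finite sums over
  the same triangle of the terms below, produced by the Leibniz rule.\<close>
definition compose_term :: "DOp \<Rightarrow> DOp \<Rightarrow> H \<Rightarrow> nat \<times> nat \<times> nat \<Rightarrow> H" where
  "compose_term A B f = (\<lambda>(m, n, i). mult_term A B (m, n, i) * (zderiv ^^ (m - i + n)) f)"

definition compose_index :: "nat \<Rightarrow> (nat \<times> nat \<times> nat) set" where
  "compose_index K = {(m, n, i). i \<le> m \<and> m + n \<le> K}"

lemma compose_index_finite: "finite (compose_index K)"
proof (rule finite_subset)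
  show "compose_index K \<subseteq> {..K} \<times> {..K} \<times> {..K}" unfolding compose_index_def by auto
qed auto

lemma compose_term_nth_zero:
  assumes A: "op_val_ge A a" and B: "op_val_ge B b" and f: "val_ge f c"
    and "i \<le> m" "k < a + b + c + int (m + n)"
  shows "compose_term A B f (m, n, i) $$ k = 0"
proof -
  have "val_ge (mult_term A B (m, n, i) * (zderiv ^^ (m - i + n)) f)
      (a + b + int i + (c + int (m - i + n)))"
    by (intro val_ge_mult val_ge_mult_term[OF A B] val_ge_zderiv_pow f)
  then show ?thesis using assms(4,5) unfolding compose_term_def by (auto intro: val_ge_nth_zero)
qed

lemma op_apply_mult_nth:
  assumes A: "op_val_ge A a" and B: "op_val_ge B b" and f: "val_ge f c"
    and K: "k - a - b - c \<le> int K"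
  shows "op_apply (op_mult A B) f $$ k = (\<Sum>t\<in>compose_index K. compose_term A B f t $$ k)"
proof -
  define level where "level = (\<lambda>(m::nat, n::nat, i::nat). m + n - i)"
  define S where "S p = {t \<in> compose_index K. level t = p}" for p
  have S_sub: "S p \<subseteq> mult_index p" for p
    unfolding S_def compose_index_def level_def mult_index_def by auto
  have S_fin: "finite (S p)" for p unfolding S_def using compose_index_finite by simp
  have "op_apply (op_mult A B) f $$ k = (\<Sum>p\<le>K. ((zderiv ^^ p) f * op_mult A B p) $$ k)"
    using op_apply_nth[OF op_val_ge_mult[OF A B] f] K by (simp add: fls_nth_sum mult.commute)
  also have "\<dots> = (\<Sum>p\<le>K. \<Sum>t\<in>S p. compose_term A B f t $$ k)"
  proof (rule sum.cong[OF refl])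
    fix p
    have "((zderiv ^^ p) f * op_mult A B p) $$ k = ((zderiv ^^ p) f * (\<Sum>t\<in>S p. mult_term A B t)) $$ k"
    proof (rule mult_nth_truncate[OF val_ge_zderiv_pow[OF f]])
      fix j assume "j \<le> k - (c + int p)"
      with K show "op_mult A B p $$ j = (\<Sum>t\<in>S p. mult_term A B t) $$ j"
        by (intro op_mult_nth_eq_sum[OF A B S_fin S_sub])
          (auto simp: S_def compose_index_def level_def mult_index_def)
    qed
    also have "(zderiv ^^ p) f * (\<Sum>t\<in>S p. mult_term A B t) = (\<Sum>t\<in>S p. compose_term A B f t)"
      unfolding sum_distrib_left
      by (intro sum.cong refl) (auto simp: S_def compose_index_def level_def compose_term_def)
    finally show "((zderiv ^^ p) f * op_mult A B p) $$ k = (\<Sum>t\<in>S p. compose_term A B f t $$ k)"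
      by (simp add: fls_nth_sum)
  qed
  also have "\<dots> = (\<Sum>t\<in>compose_index K. compose_term A B f t $$ k)"
    unfolding S_def
    by (rule sum.group[OF compose_index_finite]) (auto simp: compose_index_def level_def)
  finally show ?thesis .
qed

lemma op_apply_op_apply_nth:
  assumes A: "op_val_ge A a" and B: "op_val_ge B b" and f: "val_ge f c"
    and K: "k - a - b - c \<le> int K"
  shows "op_apply A (op_apply B f) $$ k = (\<Sum>t\<in>compose_index K. compose_term A B f t $$ k)"
proof -
  define box where "box = Sigma {..K} (\<lambda>m. Sigma {..K} (\<lambda>_. {0..m}))"
  define truncation where "truncation = (\<Sum>n\<le>K. B n * (zderiv ^^ n) f)"
  have "op_apply A (op_apply B f) $$ k = (\<Sum>m\<le>K. (A m * (zderiv ^^ m) (op_apply B f)) $$ k)"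
    using op_apply_nth[OF A val_ge_op_apply[OF B f]] K by (simp add: fls_nth_sum)
  also have "\<dots> = (\<Sum>m\<le>K. \<Sum>n\<le>K. \<Sum>i\<in>{0..m}. compose_term A B f (m, n, i) $$ k)"
  proof (rule sum.cong[OF refl])
    fix m
    have "(A m * (zderiv ^^ m) (op_apply B f)) $$ k = (A m * (zderiv ^^ m) truncation) $$ k"
    proof (rule mult_nth_truncate)
      show "val_ge (A m) a" using A unfolding op_val_ge_def by auto
      fix j assume "j \<le> k - a"
      with K show "(zderiv ^^ m) (op_apply B f) $$ j = (zderiv ^^ m) truncation $$ j"
        unfolding truncation_def by (simp add: zderiv_pow_nth op_apply_nth[OF B f])
    qed
    also have "A m * (zderiv ^^ m) truncation = (\<Sum>n\<le>K. \<Sum>i\<in>{0..m}. compose_term A B f (m, n, i))"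
    proof (unfold truncation_def zderiv_pow_sum zderiv_pow_Leibniz sum_distrib_left,
        intro sum.cong refl)
      fix n i
      have "(zderiv ^^ (m - i)) ((zderiv ^^ n) f) = (zderiv ^^ (m - i + n)) f"
        by (simp add: funpow_add)
      then show "A m * (of_nat (m choose i) * (zderiv ^^ i) (B n) * (zderiv ^^ (m - i)) ((zderiv ^^ n) f))
          = compose_term A B f (m, n, i)"
        by (simp add: compose_term_def mult_term_def algebra_simps)
    qed
    finally show "(A m * (zderiv ^^ m) (op_apply B f)) $$ k =
        (\<Sum>n\<le>K. \<Sum>i\<in>{0..m}. compose_term A B f (m, n, i) $$ k)"
      by (simp add: fls_nth_sum)
  qed
  also have "\<dots> = (\<Sum>t\<in>box. compose_term A B f t $$ k)"
    unfolding box_def by (simp add: sum.Sigma)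
  also have "\<dots> = (\<Sum>t\<in>compose_index K. compose_term A B f t $$ k)"
  proof (rule sum.mono_neutral_right)
    show "finite box" "compose_index K \<subseteq> box"
      unfolding box_def compose_index_def by auto
    show "\<forall>t\<in>box - compose_index K. compose_term A B f t $$ k = 0"
    proof
      fix t assume "t \<in> box - compose_index K"
      with K show "compose_term A B f t $$ k = 0"
        by (cases t) (auto simp: box_def compose_index_def intro!: compose_term_nth_zero[OF A B f])
    qed
  qed
  finally show ?thesis .
qed

lemma op_apply_mult:
  assumes "op_val_ge A a" "op_val_ge B b" "val_ge f c"
  shows "op_apply (op_mult A B) f = op_apply A (op_apply B f)"
proof (rule fls_eqI)
  fix k
  have K: "k - a - b - c \<le> int (nat (k - a - b - c))" by simp
  show "op_apply (op_mult A B) f $$ k = op_apply A (op_apply B f) $$ k"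
    unfolding op_apply_mult_nth[OF assms K] op_apply_op_apply_nth[OF assms K] ..
qed

section \<open>Action on monomials and the projection \<open>\<pi>\<^sub>+\<close>\<close>

lemma zH_pow_nth: "(zH ^ n) $$ k = (if k = - int n then 1 else 0)"
  unfolding zH_def by simp

lemma val_ge_zH_pow: "val_ge (zH ^ n) (- int n)"
  unfolding val_ge_def by (simp add: zH_pow_nth)

lemma zderiv_pow_zH_pow_nth:
  "(zderiv ^^ m) (zH ^ n) $$ k = (if k = int m - int n then zderiv_factor m k else 0)"
  by (auto simp: zderiv_pow_nth zH_pow_nth)

lemma zderiv_pow_zH_pow_eq_0: "n < m \<Longrightarrow> (zderiv ^^ m) (zH ^ n) = 0"
  by (rule fls_eqI) (auto simp: zderiv_pow_zH_pow_nth intro!: zderiv_factor_eq_0)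

lemma zderiv_pow_zH_pow_self: "(zderiv ^^ n) (zH ^ n) = fls_const (zderiv_factor n 0)"
  by (rule fls_eqI) (auto simp: zderiv_pow_zH_pow_nth)

definition op_apply_below :: "DOp \<Rightarrow> nat \<Rightarrow> H" where
  "op_apply_below A n = (\<Sum>m<n. A m * (zderiv ^^ m) (zH ^ n))"

lemma op_apply_zH_pow:
  "op_apply A (zH ^ n) = op_apply_below A n + A n * fls_const (zderiv_factor n 0)"
proof -
  have "op_apply A (zH ^ n) = (\<Sum>m\<le>n. A m * (zderiv ^^ m) (zH ^ n))"
    by (rule op_apply_eq_sum) (simp add: zderiv_pow_zH_pow_eq_0)
  then show ?thesis
    by (simp add: op_apply_below_def lessThan_Suc_atMost[symmetric] zderiv_pow_zH_pow_self)
qed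

lemma op_apply_below_cong: "(\<And>m. m < n \<Longrightarrow> A m = B m) \<Longrightarrow> op_apply_below A n = op_apply_below B n"
  unfolding op_apply_below_def by simp

lemma const_zderiv_factor_nonzero: "fls_const (zderiv_factor n 0) \<noteq> (0 :: H)"
  using zderiv_factor_nonzero[of 0 n] by simp

text \<open>\<open>A z^n\<close> involves only \<open>A 0, \<dots>, A n\<close>, with \<open>A n\<close> entering through a nonzero
  constant factor.\<close>
lemma op_eqI_zH_pow:
  assumes "\<And>n. op_apply A (zH ^ n) = op_apply B (zH ^ n)"
  shows "A = B"
proof
  fix n show "A n = B n"
  proof (induction n rule: less_induct)
    case (less n)
    then have "op_apply_below A n = op_apply_below B n" by (intro op_apply_below_cong)
    then have "A n * fls_const (zderiv_factor n 0) = B n * fls_const (zderiv_factor n 0)"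
      using assms[of n] unfolding op_apply_zH_pow by simp
    then show "A n = B n" using const_zderiv_factor_nonzero by simp
  qed
qed

lemma op_mult_z: "op_mult B op_z p = B p * zH + of_nat (Suc p) * B (Suc p)"
proof -
  have "op_mult B op_z p = sum (mult_term B op_z) {(p, 0, 0), (Suc p, 0, 1)}"
    unfolding op_mult_eq_fsum
  proof (rule fsum_eq_sum)
    fix t assume t: "t \<in> mult_index p" "t \<notin> {(p, 0, 0), (Suc p, 0, 1)}"
    obtain m n i where t_eq: "t = (m, n, i)" by (cases t)
    have "(zderiv ^^ i) (op_z n) = 0"
    proof (cases "n = 0")
      case True
      with t have "i \<noteq> 0" "i \<noteq> 1" unfolding t_eq mult_index_def by auto
      then obtain i' where "i = Suc (Suc i')" by (metis One_nat_def not0_implies_Suc)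
      then have "(zderiv ^^ i) zH = (zderiv ^^ i') (zderiv (zderiv zH))"
        by (simp only: funpow_Suc_right o_apply)
      then show ?thesis by (simp add: True op_z_def)
    qed (simp add: op_z_def)
    then show "mult_term B op_z t = 0" unfolding t_eq mult_term_def by simp
  qed (auto simp: mult_index_def)
  then show ?thesis by (simp add: mult_term_def op_z_def)
qed

lemma piplus_nth: "piplus f $$ k = (if k \<le> 0 then f $$ k else 0)"
  unfolding piplus_def by (rule nth_Abs_fls_lower_bound[of "fls_subdegree f"]) auto

lemma piplus_diff: "piplus (f - g) = piplus f - piplus g"
  and piplus_const_mult: "piplus (fls_const c * f) = fls_const c * piplus f"
  by (rule fls_eqI; simp add: piplus_nth)+

lemma piplus_in_Hplus: "piplus f \<in> Hplus"
  unfolding Hplus_def by (simp add: piplus_nth)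

lemma piplus_eq_0_iff: "piplus f = 0 \<longleftrightarrow> f \<in> Hminus"
  unfolding Hminus_def fls_eq_iff by (auto simp: piplus_nth split: if_splits)

lemma piplus_Hplus: "f \<in> Hplus \<Longrightarrow> piplus f = f"
  unfolding Hplus_def by (intro fls_eqI) (auto simp: piplus_nth)

lemma Hminus_iff_val_ge: "f \<in> Hminus \<longleftrightarrow> val_ge f 1"
  unfolding Hminus_def val_ge_def by auto

lemma zH_pow_in_Hplus: "zH ^ n \<in> Hplus"
  and op_one_in_Hplus: "op_one n \<in> Hplus"
  unfolding Hplus_def op_one_def by (auto simp: zH_pow_nth)

lemma Hplus_add: "f \<in> Hplus \<Longrightarrow> g \<in> Hplus \<Longrightarrow> f + g \<in> Hplus"
  and Hplus_const_mult: "f \<in> Hplus \<Longrightarrow> fls_const c * f \<in> Hplus"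
  and Hminus_diff: "f \<in> Hminus \<Longrightarrow> g \<in> Hminus \<Longrightarrow> f - g \<in> Hminus"
  and Hminus_const_mult: "f \<in> Hminus \<Longrightarrow> fls_const c * f \<in> Hminus"
  unfolding Hplus_def Hminus_def by auto

lemma Hplus_eq_sum_zH_pow:
  assumes "p \<in> Hplus" "val_ge p (- int N)"
  shows "p = (\<Sum>n\<le>N. fls_const (p $$ (- int n)) * zH ^ n)"
proof (rule fls_eqI)
  fix k
  have "(\<Sum>n\<le>N. fls_const (p $$ (- int n)) * zH ^ n) $$ k
      = (\<Sum>n\<le>N. if n = nat (- k) then (if k \<le> 0 then p $$ k else 0) else 0)"
    unfolding fls_nth_sum by (intro sum.cong refl) (auto simp: zH_pow_nth)
  also have "\<dots> = p $$ k"
    using assms unfolding Hplus_def val_ge_def by (auto simp: not_le)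
  finally show "p $$ k = (\<Sum>n\<le>N. fls_const (p $$ (- int n)) * zH ^ n) $$ k" by simp
qed

section \<open>Sato operators of a point of the Grassmannian\<close>

locale Gr0plus_point =
  fixes W :: "H set"
  assumes W: "W \<in> Gr0plus"
begin

lemma zero_in_W: "0 \<in> W"
  and add_in_W: "x \<in> W \<Longrightarrow> y \<in> W \<Longrightarrow> x + y \<in> W"
  and const_mult_in_W: "x \<in> W \<Longrightarrow> fls_const c * x \<in> W"
  and bij_betw_piplus: "bij_betw piplus W Hplus"
  using W unfolding Gr0plus_def by auto

lemma diff_in_W:
  assumes "x \<in> W" "y \<in> W"
  shows "x - y \<in> W"
proof -
  have "fls_const (-1) * y = - y" by (rule fls_eqI) simp
  then show ?thesis using add_in_W[OF assms(1) const_mult_in_W[OF assms(2), of "-1"]] by simp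
qed

lemma sum_in_W: "(\<And>i. i \<in> S \<Longrightarrow> F i \<in> W) \<Longrightarrow> sum F S \<in> W"
  by (induction S rule: infinite_finite_induct) (auto intro: zero_in_W add_in_W)

lemma W_Hminus_eq_0: "w \<in> W \<Longrightarrow> w \<in> Hminus \<Longrightarrow> w = 0"
  using bij_betw_piplus zero_in_W piplus_eq_0_iff[of w] piplus_eq_0_iff[of 0]
  unfolding bij_betw_def inj_on_def by (auto simp: Hminus_def)

definition lift :: "H \<Rightarrow> H" where
  "lift p = inv_into W piplus p"

lemma lift_in_W: "p \<in> Hplus \<Longrightarrow> lift p \<in> W"
  and piplus_lift: "p \<in> Hplus \<Longrightarrow> piplus (lift p) = p"
  unfolding lift_def using bij_betw_piplus
  by (metis bij_betw_imp_surj_on inv_into_into, metis bij_betw_imp_surj_on f_inv_into_f)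

definition dressing :: "DOp \<Rightarrow> bool" where
  "dressing G \<longleftrightarrow> op_sub G op_one \<in> Dminus \<and> (\<forall>n. op_apply G (zH ^ n) \<in> W)"

lemma dressing_op_val_ge: "dressing G \<Longrightarrow> op_val_ge G 0"
  unfolding dressing_def using Dminus_op_val_ge by blast

lemma dressing_apply_Hplus:
  assumes G: "dressing G" and p: "p \<in> Hplus"
  shows "op_apply G p \<in> W"
proof -
  define N where "N = nat (- fls_subdegree p)"
  have p_val: "val_ge p (- int N)" unfolding N_def by (rule val_ge_mono[OF val_ge_subdegree]) simp
  have "val_ge (fls_const (p $$ (- int n)) * zH ^ n) (0 + - int n)" for n
    by (intro val_ge_mult val_ge_const val_ge_zH_pow)
  then have term_val: "val_ge (fls_const (p $$ (- int n)) * zH ^ n) (- int N)" if "n \<le> N" for n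
    by (rule val_ge_mono) (use that in simp)
  have "op_apply G p = (\<Sum>n\<le>N. op_apply G (fls_const (p $$ (- int n)) * zH ^ n))"
    by (subst Hplus_eq_sum_zH_pow[OF p p_val])
      (rule op_apply_sum[OF dressing_op_val_ge[OF G]], use term_val in simp)
  also have "\<dots> = (\<Sum>n\<le>N. fls_const (p $$ (- int n)) * op_apply G (zH ^ n))"
    by (intro sum.cong refl op_apply_const_mult[OF dressing_op_val_ge[OF G] val_ge_zH_pow val_ge_zH_pow])
  finally show ?thesis using G unfolding dressing_def by (auto intro: sum_in_W const_mult_in_W)
qed

lemma dressing_apply_zH_pow_leading:
  assumes "dressing G"
  shows "val_ge (op_apply G (zH ^ n)) (- int n)" "op_apply G (zH ^ n) $$ (- int n) = 1"
proof -
  have G: "op_val_ge G 0" "op_val_ge (op_sub G op_one) 1"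
    using assms Dminus_op_val_ge unfolding dressing_def by auto
  show "val_ge (op_apply G (zH ^ n)) (- int n)"
    using val_ge_op_apply[OF G(1) val_ge_zH_pow] by simp
  have "op_apply (op_sub G op_one) (zH ^ n) = op_apply G (zH ^ n) - zH ^ n"
    using op_apply_op_sub[OF G(1) op_val_ge_one val_ge_zH_pow] by simp
  moreover have "val_ge (op_apply (op_sub G op_one) (zH ^ n)) (1 + - int n)"
    by (rule val_ge_op_apply[OF G(2) val_ge_zH_pow])
  ultimately show "op_apply G (zH ^ n) $$ (- int n) = 1"
    by (auto simp: val_ge_def zH_pow_nth dest: spec[of _ "- int n"])
qed

text \<open>Surjectivity onto \<open>W\<close> by descending induction on the order of \<open>w\<close>: subtracting a multiple
  of \<open>G z^N\<close> kills the leading coefficient, and an element of \<open>W \<inter> H_-\<close> is zero.\<close>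
lemma dressing_image_cover:
  assumes G: "dressing G"
  shows "w \<in> W \<Longrightarrow> val_ge w (1 - int N) \<Longrightarrow> w \<in> op_apply G ` Hplus"
proof (induction N arbitrary: w)
  case 0
  then have "w = 0" using W_Hminus_eq_0 Hminus_iff_val_ge by simp
  then show ?case using zH_pow_in_Hplus[of 0] op_apply_0 Hplus_const_mult[of _ 0] by force
next
  case (Suc N)
  define a where "a = w $$ (- int N)"
  define w' where "w' = w - fls_const a * op_apply G (zH ^ N)"
  have "w' \<in> W" unfolding w'_def
    using Suc.prems(1) G unfolding dressing_def by (intro diff_in_W const_mult_in_W) auto
  moreover have "val_ge w' (1 - int N)"
    unfolding val_ge_def
  proof (intro allI impI)
    fix k assume "k < 1 - int N"
    then consider "k = - int N" | "k < - int N" by linarith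
    then show "w' $$ k = 0"
      using Suc.prems(2) dressing_apply_zH_pow_leading[OF G, of N]
      unfolding w'_def a_def val_ge_def by cases auto
  qed
  ultimately obtain p' where p': "p' \<in> Hplus" "op_apply G p' = w'" using Suc.IH by blast
  obtain c where c: "val_ge p' c" "val_ge (fls_const a * zH ^ N) c" using val_ge_common by blast
  have G0: "op_val_ge G 0" by (rule dressing_op_val_ge[OF G])
  have "op_apply G (p' + fls_const a * zH ^ N) = w"
    using op_apply_const_mult[OF G0 val_ge_zH_pow val_ge_zH_pow, where x = a]
    unfolding op_apply_add[OF G0 c] p'(2) w'_def by simp
  moreover have "p' + fls_const a * zH ^ N \<in> Hplus"
    by (intro Hplus_add Hplus_const_mult p'(1) zH_pow_in_Hplus)
  ultimately show ?case by blast
qed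

lemma dressing_image: "dressing G \<Longrightarrow> op_apply G ` Hplus = W"
proof (intro equalityI subsetI)
  fix w assume "dressing G" "w \<in> W"
  moreover have "val_ge w (1 - int (nat (1 - fls_subdegree w)))"
    by (rule val_ge_mono[OF val_ge_subdegree]) simp
  ultimately show "w \<in> op_apply G ` Hplus" by (rule dressing_image_cover)
qed (auto intro: dressing_apply_Hplus)

lemma dressing_unique:
  assumes G: "dressing G" and G': "dressing G'"
  shows "G = G'"
proof
  fix n show "G n = G' n"
  proof (induction n rule: less_induct)
    case (less n)
    define d where "d = op_apply G (zH ^ n) - op_apply G' (zH ^ n)"
    have "op_apply_below G n = op_apply_below G' n" using less by (intro op_apply_below_cong)
    then have d_eq: "d = fls_const (zderiv_factor n 0) * (G n - G' n)"
      unfolding d_def op_apply_zH_pow by (simp add: algebra_simps)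
    have "G n - G' n = op_sub G op_one n - op_sub G' op_one n" by (simp add: op_sub_def)
    then have "G n - G' n \<in> Hminus"
      using G G' unfolding dressing_def Dminus_def by (auto intro: Hminus_diff)
    then have "d \<in> Hminus" unfolding d_eq by (rule Hminus_const_mult)
    moreover have "d \<in> W" using G G' unfolding d_def dressing_def by (auto intro: diff_in_W)
    ultimately have "d = 0" by (rule W_Hminus_eq_0[rotated])
    then show "G n = G' n" unfolding d_eq using const_zderiv_factor_nonzero by simp
  qed
qed

lemma satoG_eqI: "dressing G \<Longrightarrow> satoG W = G"
  unfolding satoG_def
proof (rule the_equality)
  fix G' assume "dressing G" "op_sub G' op_one \<in> Dminus \<and> W = op_apply G' ` Hplus"
  then show "G' = G"
    using dressing_unique zH_pow_in_Hplus unfolding dressing_def by blast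
qed (auto simp: dressing_def dressing_image)

lemma wavePsi_eq: "dressing G \<Longrightarrow> wavePsi W = G 0"
  unfolding wavePsi_def
proof (rule the_equality)
  assume G: "dressing G"
  have "op_apply G (zH ^ 0) = G 0" using op_apply_zH_pow[of G 0] by (simp add: op_apply_below_def)
  then have "G 0 \<in> W" using G unfolding dressing_def by metis
  moreover have "G 0 - 1 \<in> Hminus"
    using G unfolding dressing_def Dminus_def op_sub_def op_one_def by (auto dest: spec[of _ 0])
  ultimately show "G 0 \<in> W \<and> G 0 - 1 \<in> Hminus" ..
  fix psi assume "psi \<in> W \<and> psi - 1 \<in> Hminus"
  with \<open>G 0 \<in> W\<close> \<open>G 0 - 1 \<in> Hminus\<close> have "psi - G 0 \<in> W \<inter> Hminus"
    using diff_in_W Hminus_diff[of "psi - 1" "G 0 - 1"] by auto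
  then show "psi = G 0" using W_Hminus_eq_0[of "psi - G 0"] by simp
qed

text \<open>Existence in Sato's theorem: \<open>G n\<close> is chosen so that \<open>G z^n\<close> is the element of \<open>W\<close>
  over \<open>\<pi>\<^sub>+\<close> of its part already fixed by \<open>G 0, \<dots>, G (n - 1)\<close> (plus \<open>1\<close> when \<open>n = 0\<close>).\<close>
definition sato_step :: "DOp \<Rightarrow> nat \<Rightarrow> H" where
  "sato_step G n = fls_const (1 / zderiv_factor n 0) *
     (lift (piplus (op_apply_below G n) + op_one n) - op_apply_below G n)"

definition sato_op :: DOp where
  "sato_op = wfrec less_than sato_step"

lemma sato_op_step: "sato_op n = sato_step sato_op n"
proof -
  have "adm_wf less_than sato_step"
    unfolding adm_wf_def
  proof (intro allI impI)
    fix F G :: DOp and n assume "\<forall>m. (m, n) \<in> less_than \<longrightarrow> F m = G m"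
    then have "op_apply_below F n = op_apply_below G n" by (intro op_apply_below_cong) simp
    then show "sato_step F n = sato_step G n" unfolding sato_step_def by simp
  qed
  then show ?thesis unfolding sato_op_def by (subst wfrec_fixpoint) auto
qed

lemma sato_op_apply_zH_pow:
  "op_apply sato_op (zH ^ n) = lift (piplus (op_apply_below sato_op n) + op_one n)"
proof -
  have cancel: "fls_const (1 / zderiv_factor n 0) * X * fls_const (zderiv_factor n 0) = (X :: H)" for X
    using zderiv_factor_nonzero[of 0 n]
    by (simp add: mult.commute mult.left_commute fls_const_mult_const[symmetric])
  show ?thesis unfolding op_apply_zH_pow sato_op_step[of n] sato_step_def cancel by simp
qed

lemma dressing_sato_op: "dressing sato_op"
  unfolding dressing_def Dminus_def
proof (intro conjI allI CollectI)
  define S where "S n = op_apply_below sato_op n" for n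
  have lift_S: "lift (piplus (S n) + op_one n) \<in> W \<and> piplus (lift (piplus (S n) + op_one n)) = piplus (S n) + op_one n" for n
    using Hplus_add[OF piplus_in_Hplus op_one_in_Hplus] by (simp add: lift_in_W piplus_lift)
  then show "op_apply sato_op (zH ^ n) \<in> W" for n
    unfolding sato_op_apply_zH_pow S_def by simp
  fix n
  have "fls_const (1 / zderiv_factor n 0) * op_one n = op_one n"
    by (simp add: op_one_def)
  then have "piplus (sato_op n) = op_one n"
    using lift_S[of n] unfolding sato_op_step[of n] sato_step_def S_def[symmetric]
    by (simp add: piplus_const_mult piplus_diff)
  then show "op_sub sato_op op_one n \<in> Hminus"
    unfolding piplus_eq_0_iff[symmetric] op_sub_def
    by (simp add: piplus_diff piplus_Hplus[OF op_one_in_Hplus])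
qed

lemma dressing_satoG: "dressing (satoG W)"
  using satoG_eqI[OF dressing_sato_op] dressing_sato_op by simp

end

section \<open>Inverses in \<open>1 + D\<^sub>-\<close>\<close>

locale unipotent_op =
  fixes G :: DOp
  assumes G_Dminus: "op_sub G op_one \<in> Dminus"
begin

abbreviation T :: DOp where "T \<equiv> op_sub G op_one"

lemma op_val_ge_T: "op_val_ge T 1" and op_val_ge_G: "op_val_ge G 0"
  using Dminus_op_val_ge[OF G_Dminus] by auto

lemma op_apply_G: "val_ge f c \<Longrightarrow> op_apply G f = f + op_apply T f"
  using op_apply_op_sub[OF op_val_ge_G op_val_ge_one, of f c] by simp

lemma op_apply_G_inj:
  assumes "op_apply G f = op_apply G g"
  shows "f = g"
proof (rule ccontr)
  assume "f \<noteq> g"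
  obtain c where c: "val_ge f c" "val_ge g c" using val_ge_common by blast
  define d where "d = f - g"
  define s where "s = fls_subdegree d"
  have d: "val_ge d s" unfolding s_def by (rule val_ge_subdegree)
  have "d + op_apply T d = 0"
    using assms op_apply_diff[OF op_val_ge_G c] op_apply_G[OF d] unfolding d_def by simp
  moreover have "op_apply T d $$ s = 0" using val_ge_op_apply[OF op_val_ge_T d] by (simp add: val_ge_def)
  moreover have "d $$ s \<noteq> 0"
    using \<open>f \<noteq> g\<close> unfolding s_def d_def by (intro nth_fls_subdegree_nonzero) simp
  ultimately show False by (metis add.right_neutral fls_plus_nth fls_zero_nth)
qed

text \<open>\<open>G = 1 + T\<close> with \<open>T\<close> raising the order, so \<open>G\<close> is inverted on \<open>H\<close> by the Neumann series
  \<open>\<Sum>\<^sub>j (-T)^j\<close>.\<close>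
definition neumann_term :: "H \<Rightarrow> nat \<Rightarrow> H" where
  "neumann_term h j = ((\<lambda>g. - op_apply T g) ^^ j) h"

definition solve :: "H \<Rightarrow> H" where
  "solve h = fsum (neumann_term h) UNIV"

lemma val_ge_neumann_term: "val_ge h c \<Longrightarrow> val_ge (neumann_term h j) (c + int j)"
proof (induction j)
  case (Suc j)
  then have "val_ge (op_apply T (neumann_term h j)) (1 + (c + int j))"
    by (intro val_ge_op_apply[OF op_val_ge_T])
  then show ?case unfolding neumann_term_def by (simp add: val_ge_uminus add_ac)
qed (simp add: neumann_term_def)

lemma neumann_summable:
  assumes h: "val_ge h c"
  shows "fsummable (neumann_term h) UNIV"
proof (rule fsummableI)
  show "val_ge (neumann_term h j) c" for j
    using val_ge_neumann_term[OF h] by (rule val_ge_mono) simp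
  fix k
  have "neumann_term h j $$ k = 0" if "j \<notin> {..nat (k - c)}" for j
    using val_ge_nth_zero[OF val_ge_neumann_term[OF h]] that by simp
  then show "\<exists>S. finite S \<and> (\<forall>j\<in>UNIV. j \<notin> S \<longrightarrow> neumann_term h j $$ k = 0)" by blast
qed

lemma val_ge_solve: "val_ge h c \<Longrightarrow> val_ge (solve h) c"
  unfolding solve_def
  by (rule val_ge_fsum[OF neumann_summable]) (auto intro: val_ge_mono[OF val_ge_neumann_term])

lemma solve_nth:
  assumes h: "val_ge h c" and J: "k - c \<le> int J"
  shows "solve h $$ k = (\<Sum>j\<le>J. neumann_term h j) $$ k"
  unfolding solve_def fls_nth_sum
  by (rule fsum_nth_eq_sum[OF neumann_summable[OF h]])
    (use J val_ge_nth_zero[OF val_ge_neumann_term[OF h]] in auto)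

lemma op_apply_solve:
  assumes h: "val_ge h c"
  shows "op_apply G (solve h) = h"
proof (rule fls_eqI)
  fix k
  define J where "J = nat (k - c)"
  define P where "P = (\<Sum>j\<le>J. neumann_term h j)"
  have P: "val_ge P c" unfolding P_def
    by (intro val_ge_sum val_ge_mono[OF val_ge_neumann_term[OF h]]) simp
  have "val_ge (solve h - P) (c + int J + 1)"
    unfolding val_ge_def P_def using solve_nth[OF h] by simp
  then have "op_apply T (solve h - P) $$ k = 0"
    using val_ge_nth_zero[OF val_ge_op_apply[OF op_val_ge_T]] unfolding J_def by simp
  then have "op_apply T (solve h) $$ k = op_apply T P $$ k"
    using op_apply_diff[OF op_val_ge_T val_ge_solve[OF h] P] by simp
  moreover have "op_apply T P = (\<Sum>j\<le>J. op_apply T (neumann_term h j))"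
    unfolding P_def
    by (rule op_apply_sum[OF op_val_ge_T, where c = c])
      (rule val_ge_mono[OF val_ge_neumann_term[OF h]], simp)
  then have "op_apply T P = - (\<Sum>j\<le>J. neumann_term h (Suc j))"
    by (simp add: neumann_term_def sum_negf)
  moreover have "solve h $$ k = P $$ k" using solve_nth[OF h] unfolding P_def J_def by simp
  moreover have "neumann_term h (Suc J) $$ k = 0"
    using val_ge_nth_zero[OF val_ge_neumann_term[OF h]] unfolding J_def by simp
  ultimately have "op_apply G (solve h) $$ k = (neumann_term h 0 - neumann_term h (Suc J)) $$ k"
    unfolding op_apply_G[OF val_ge_solve[OF h]] sum_telescope[symmetric] P_def
    by (simp add: sum_subtractf)
  then show "op_apply G (solve h) $$ k = h $$ k"
    using \<open>neumann_term h (Suc J) $$ k = 0\<close> by (simp add: neumann_term_def)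
qed

definition mult_below :: "DOp \<Rightarrow> nat \<Rightarrow> H" where
  "mult_below X p = fsum (mult_term G X) {t \<in> mult_index p. fst (snd t) < p}"

lemma mult_below_cong: "(\<And>n. n < p \<Longrightarrow> X n = Y n) \<Longrightarrow> mult_below X p = mult_below Y p"
  unfolding mult_below_def by (rule fsum_cong) (auto simp: mult_term_def)

lemma op_mult_G_split:
  assumes X: "op_val_ge X b"
  shows "op_mult G X p = op_apply G (X p) + mult_below X p"
proof -
  let ?below = "{t \<in> mult_index p. fst (snd t) < p}"
  have "mult_index p - ?below = (\<lambda>m. (m, p, m)) ` UNIV" unfolding mult_index_def by auto
  moreover have "fsum (mult_term G X) ((\<lambda>m. (m, p, m)) ` UNIV) = op_apply G (X p)"
    by (subst fsum_reindex) (auto simp: inj_on_def op_apply_def mult_term_def o_def)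
  ultimately show ?thesis
    using fsum_split[OF op_mult_summable[OF op_val_ge_G X], of ?below p]
    unfolding op_mult_eq_fsum mult_below_def by (simp add: add.commute)
qed

lemma val_ge_mult_below:
  assumes "\<And>n. n < p \<Longrightarrow> val_ge (X n) 0"
  shows "val_ge (mult_below X p) 1"
proof -
  define Y where "Y n = (if n < p then X n else 0)" for n
  have Y: "op_val_ge Y 0" unfolding op_val_ge_def Y_def using assms by auto
  have "mult_below X p = mult_below Y p" by (rule mult_below_cong) (simp add: Y_def)
  also have "val_ge (mult_below Y p) 1" unfolding mult_below_def
  proof (rule val_ge_fsum)
    show "fsummable (mult_term G Y) {t \<in> mult_index p. fst (snd t) < p}"
      by (rule fsummable_subset[OF op_mult_summable[OF op_val_ge_G Y]]) auto
    fix t assume t: "t \<in> {t \<in> mult_index p. fst (snd t) < p}"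
    obtain m n i where t_eq: "t = (m, n, i)" by (cases t)
    then have "0 < m" using t unfolding mult_index_def by auto
    moreover have "val_ge (G m - op_one m) 1"
      using G_Dminus unfolding Dminus_def op_sub_def Hminus_iff_val_ge by auto
    ultimately have "val_ge (G m) 1" by (simp add: op_one_def)
    then have "val_ge (of_nat (m choose i) * G m * (zderiv ^^ i) (Y n)) (0 + 1 + (0 + int i))"
      using Y unfolding op_val_ge_def by (intro val_ge_mult val_ge_of_nat val_ge_zderiv_pow) auto
    then show "val_ge (mult_term G Y t) 1"
      unfolding t_eq mult_term_def by (auto elim: val_ge_mono)
  qed
  finally show ?thesis .
qed

text \<open>The inverse is built coefficient by coefficient from \<open>(G X) p = G (X p) + (terms with
  X 0, \<dots>, X (p - 1)) = op_one p\<close>.\<close>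
definition inv_step :: "DOp \<Rightarrow> nat \<Rightarrow> H" where
  "inv_step X p = solve (op_one p - mult_below X p)"

definition inv_op :: DOp where
  "inv_op = wfrec less_than inv_step"

lemma inv_op_step: "inv_op p = inv_step inv_op p"
proof -
  have "adm_wf less_than inv_step"
    unfolding adm_wf_def
  proof (intro allI impI)
    fix X Y :: DOp and p assume "\<forall>n. (n, p) \<in> less_than \<longrightarrow> X n = Y n"
    then have "mult_below X p = mult_below Y p" by (intro mult_below_cong) simp
    then show "inv_step X p = inv_step Y p" unfolding inv_step_def by simp
  qed
  then show ?thesis unfolding inv_op_def by (subst wfrec_fixpoint) auto
qed

lemma mult_below_0 [simp]: "mult_below X 0 = 0"
  unfolding mult_below_def by simp

lemma val_ge_inv_op: "val_ge (inv_op p) (if p = 0 then 0 else 1)"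
proof (induction p rule: less_induct)
  case (less p)
  show ?case
  proof (cases p)
    case 0
    then show ?thesis using val_ge_solve[OF val_ge_1] by (simp add: inv_op_step inv_step_def op_one_def)
  next
    case (Suc p')
    have "val_ge (inv_op n) 0" if "n < p" for n by (rule val_ge_mono[OF less.IH[OF that]]) simp
    then have "val_ge (mult_below inv_op p) 1" by (rule val_ge_mult_below)
    moreover have "inv_op p = solve (- mult_below inv_op p)"
      unfolding inv_op_step[of p] inv_step_def using Suc by (simp add: op_one_def)
    ultimately show ?thesis using Suc by (simp add: val_ge_solve val_ge_uminus)
  qed
qed

lemma op_val_ge_inv_op: "op_val_ge inv_op 0"
  unfolding op_val_ge_def by (intro allI val_ge_mono[OF val_ge_inv_op]) simp

lemma inv_op_Dminus: "op_sub inv_op op_one \<in> Dminus"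
  unfolding Dminus_def
proof (intro CollectI allI)
  fix p show "op_sub inv_op op_one p \<in> Hminus"
  proof (cases p)
    case 0
    have "inv_op 0 + op_apply T (inv_op 0) = 1"
      using op_apply_solve[OF val_ge_1] op_apply_G[OF val_ge_inv_op[of 0, simplified]]
      by (simp add: inv_op_step inv_step_def op_one_def)
    then have "inv_op 0 - 1 = - op_apply T (inv_op 0)" by (simp flip: \<open>_ = 1\<close>)
    moreover have "val_ge (op_apply T (inv_op 0)) 1"
      using val_ge_op_apply[OF op_val_ge_T val_ge_inv_op[of 0]] by simp
    ultimately show ?thesis
      unfolding 0 op_sub_def op_one_def Hminus_iff_val_ge by (simp add: val_ge_uminus)
  next
    case (Suc p')
    then show ?thesis
      using val_ge_inv_op[of p] unfolding op_sub_def op_one_def Hminus_iff_val_ge by simp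
  qed
qed

lemma op_mult_G_inv_op: "op_mult G inv_op = op_one"
proof
  fix p
  obtain c where "val_ge (op_one p - mult_below inv_op p) c" using val_ge_subdegree by blast
  then show "op_mult G inv_op p = op_one p"
    unfolding op_mult_G_split[OF op_val_ge_inv_op] inv_op_step[of p] inv_step_def
    by (simp add: op_apply_solve)
qed

lemma op_apply_inv_op_G: "op_apply inv_op (op_apply G h) = h"
proof (rule op_apply_G_inj)
  have Gh: "val_ge (op_apply G h) (0 + fls_subdegree h)"
    by (rule val_ge_op_apply[OF op_val_ge_G val_ge_subdegree])
  show "op_apply G (op_apply inv_op (op_apply G h)) = op_apply G h"
    using op_apply_mult[OF op_val_ge_G op_val_ge_inv_op Gh] by (simp add: op_mult_G_inv_op)
qed

lemma op_inv_eq: "op_inv G = inv_op"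
  unfolding op_inv_def
proof (rule the_equality)
  have "op_mult inv_op G = op_one"
    by (rule op_eqI_zH_pow)
      (simp add: op_apply_mult[OF op_val_ge_inv_op op_val_ge_G val_ge_zH_pow] op_apply_inv_op_G)
  then show "op_sub inv_op op_one \<in> Dminus \<and> op_mult G inv_op = op_one \<and> op_mult inv_op G = op_one"
    using inv_op_Dminus op_mult_G_inv_op by simp
  fix X assume X: "op_sub X op_one \<in> Dminus \<and> op_mult G X = op_one \<and> op_mult X G = op_one"
  then have X_val: "op_val_ge X 0" using Dminus_op_val_ge by blast
  show "X = inv_op"
  proof (rule op_eqI_zH_pow, rule op_apply_G_inj)
    fix n
    have "op_apply G (op_apply X (zH ^ n)) = op_apply (op_mult G X) (zH ^ n)"
      by (rule op_apply_mult[OF op_val_ge_G X_val val_ge_zH_pow, symmetric])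
    also have "\<dots> = op_apply (op_mult G inv_op) (zH ^ n)" using X op_mult_G_inv_op by simp
    also have "\<dots> = op_apply G (op_apply inv_op (zH ^ n))"
      by (rule op_apply_mult[OF op_val_ge_G op_val_ge_inv_op val_ge_zH_pow])
    finally show "op_apply G (op_apply X (zH ^ n)) = op_apply G (op_apply inv_op (zH ^ n))" .
  qed
qed

lemma op_mult_op_inv_G:
  assumes A: "op_val_ge A a"
  shows "op_mult (op_mult A (op_inv G)) G = A"
proof (rule op_eqI_zH_pow)
  fix n
  have AX: "op_val_ge (op_mult A inv_op) (a + 0)" by (rule op_val_ge_mult[OF A op_val_ge_inv_op])
  have Gz: "val_ge (op_apply G (zH ^ n)) (0 + - int n)"
    by (rule val_ge_op_apply[OF op_val_ge_G val_ge_zH_pow])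
  have "op_apply (op_mult (op_mult A inv_op) G) (zH ^ n) = op_apply (op_mult A inv_op) (op_apply G (zH ^ n))"
    by (rule op_apply_mult[OF AX op_val_ge_G val_ge_zH_pow])
  also have "\<dots> = op_apply A (op_apply inv_op (op_apply G (zH ^ n)))"
    by (rule op_apply_mult[OF A op_val_ge_inv_op Gz])
  finally show "op_apply (op_mult (op_mult A (op_inv G)) G) (zH ^ n) = op_apply A (zH ^ n)"
    by (simp add: op_inv_eq op_apply_inv_op_G)
qed

end

section \<open>The intertwining equation\<close>

lemma op_mult_cong_le:
  assumes "\<And>n. n \<le> p \<Longrightarrow> B n = C n"
  shows "op_mult A B p = op_mult A C p"
  unfolding op_mult_eq_fsum
  by (rule fsum_cong) (use assms in \<open>auto simp: mult_term_def mult_index_def\<close>)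

lemma intertwiner_unique:
  assumes B: "op_mult Q B = op_mult B op_z" and C: "op_mult Q C = op_mult C op_z"
    and "B 0 = C 0"
  shows "B = C"
proof -
  have "\<forall>m\<le>n. B m = C m" for n
  proof (induction n)
    case (Suc n)
    then have "op_mult Q B n = op_mult Q C n" by (intro op_mult_cong_le) auto
    then have "of_nat (Suc n) * B (Suc n) = of_nat (Suc n) * C (Suc n)"
      using B C Suc op_mult_z[of B n] op_mult_z[of C n] by simp
    then have "B (Suc n) = C (Suc n)" using of_nat_neq_0[where 'a = H] by simp
    then show ?case using Suc by (auto simp: le_Suc_eq)
  qed (simp add: assms(3))
  then show ?thesis by auto
qed

lemma (in Gr0plus_point) opQ_intertwines_satoG: "op_mult (opQ W) (satoG W) = op_mult (satoG W) op_z"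
proof -
  interpret unipotent_op "satoG W"
    using dressing_satoG unfolding dressing_def by unfold_locales simp
  show ?thesis
    unfolding opQ_def by (rule op_mult_op_inv_G[OF op_val_ge_mult[OF op_val_ge_G op_val_ge_z]])
qed

theorem mainTheorem6:
  fixes W :: "H set" and B :: DOp
  assumes "W \<in> Gr0plus"
    and "B 0 = wavePsi W"
    and "op_mult (opQ W) B = op_mult B op_z"
  shows "B = satoG W"
proof -
  interpret Gr0plus_point W by unfold_locales (rule assms(1))
  show ?thesis
  proof (rule intertwiner_unique[OF assms(3) opQ_intertwines_satoG])
    show "B 0 = satoG W 0" using assms(2) wavePsi_eq[OF dressing_satoG] by simp
  qed
qed

end
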